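(* A Burling graph contains no triangle.
   Context: Graphs are finite, without loops or multiple edges. In a rooted tree $T$ with root $r$, each non-root vertex $v$ has a parent $p(v)$; children, leaves, ancestors and descendants are as usual. A branch is a sequence $v_1\dots v_k$ ($k\ge0$) with $v_i$ the parent of $v_{i+1}$; it starts at $v_1$. A Burling tree is a 4-tuple $(T,r,\ell,c)$: $T$ a rooted tree with root $r$; $\ell$ assigns to each non-leaf vertex $v$ one of its children $\ell(v)$ (the last-born of $v$); $c$ assigns to every vertex $v$ that is neither the root nor a last-born the vertex-set of a (possibly empty) branch starting at $\ell(p(v))$, and $c(v)=\emptyset$ if $v$ is the root or a last-born. The oriented graph fully derived from it has vertex-set $V(T)$ and an arc $uv$ iff $v\in c(u)$. A (non-oriented) graph is a Burling graph if it is isomorphic to an induced subgraph of the underlying graph of the oriented graph fully derived from some Burling tree. A triangle is a set of three pairwise adjacent vertices. *)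

theory Defs
  imports Main
begin

text \<open>Rooted tree on a finite vertex set V with root r and parent function p
  (p is only meaningful on V - {r}); every vertex reaches the root by iterating p.\<close>
definition rooted_tree :: "'v set \<Rightarrow> 'v \<Rightarrow> ('v \<Rightarrow> 'v) \<Rightarrow> bool" where
  "rooted_tree V r p \<longleftrightarrow> finite V \<and> r \<in> V \<and> (\<forall>v \<in> V - {r}. p v \<in> V)
     \<and> (\<forall>v \<in> V. \<exists>n. (p ^^ n) v = r)"

definition children :: "'v set \<Rightarrow> 'v \<Rightarrow> ('v \<Rightarrow> 'v) \<Rightarrow> 'v \<Rightarrow> 'v set" where
  "children V r p u = {v \<in> V - {r}. p v = u}"

definition is_branch :: "'v set \<Rightarrow> 'v \<Rightarrow> ('v \<Rightarrow> 'v) \<Rightarrow> 'v list \<Rightarrow> bool" where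
  "is_branch V r p xs \<longleftrightarrow> set xs \<subseteq> V \<and>
     (\<forall>i. Suc i < length xs \<longrightarrow> xs ! Suc i \<noteq> r \<and> p (xs ! Suc i) = xs ! i)"

definition branch_starting_at :: "'v set \<Rightarrow> 'v \<Rightarrow> ('v \<Rightarrow> 'v) \<Rightarrow> 'v \<Rightarrow> 'v list \<Rightarrow> bool" where
  "branch_starting_at V r p a xs \<longleftrightarrow> is_branch V r p xs \<and> (xs = [] \<or> hd xs = a)"

definition burling_tree ::
  "'v set \<Rightarrow> 'v \<Rightarrow> ('v \<Rightarrow> 'v) \<Rightarrow> ('v \<Rightarrow> 'v) \<Rightarrow> ('v \<Rightarrow> 'v set) \<Rightarrow> bool" where
  "burling_tree V r p l c \<longleftrightarrow> rooted_tree V r p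
     \<and> (\<forall>v \<in> V. children V r p v \<noteq> {} \<longrightarrow> l v \<in> children V r p v)
     \<and> (\<forall>v \<in> V. (v = r \<or> l (p v) = v) \<longrightarrow> c v = {})
     \<and> (\<forall>v \<in> V - {r}. l (p v) \<noteq> v \<longrightarrow>
          (\<exists>xs. branch_starting_at V r p (l (p v)) xs \<and> c v = set xs))"

definition derived_arc :: "'v set \<Rightarrow> ('v \<Rightarrow> 'v set) \<Rightarrow> 'v \<Rightarrow> 'v \<Rightarrow> bool" where
  "derived_arc V c u v \<longleftrightarrow> u \<in> V \<and> v \<in> V \<and> v \<in> c u"

definition simple_graph :: "'b set \<Rightarrow> ('b \<Rightarrow> 'b \<Rightarrow> bool) \<Rightarrow> bool" where
  "simple_graph W E \<longleftrightarrow> finite W \<and> (\<forall>x y. E x y \<longrightarrow> x \<in> W \<and> y \<in> W)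
     \<and> (\<forall>x y. E x y \<longrightarrow> E y x) \<and> (\<forall>x. \<not> E x x)"

text \<open>Burling graph: isomorphic to an induced subgraph of the underlying graph of the
  oriented graph fully derived from some Burling tree (tree vertices labelled by nat,
  which is no loss of generality since trees are finite).\<close>
definition burling_graph :: "'b set \<Rightarrow> ('b \<Rightarrow> 'b \<Rightarrow> bool) \<Rightarrow> bool" where
  "burling_graph W E \<longleftrightarrow> simple_graph W E \<and>
     (\<exists>(V::nat set) r p l c f. burling_tree V r p l c \<and> inj_on f W \<and> f ` W \<subseteq> V \<and>
        (\<forall>x \<in> W. \<forall>y \<in> W. E x y \<longleftrightarrow> (derived_arc V c (f x) (f y) \<or> derived_arc V c (f y) (f x))))"

definition has_triangle :: "'b set \<Rightarrow> ('b \<Rightarrow> 'b \<Rightarrow> bool) \<Rightarrow> bool" where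
  "has_triangle W E \<longleftrightarrow> (\<exists>x \<in> W. \<exists>y \<in> W. \<exists>z \<in> W. x \<noteq> y \<and> y \<noteq> z \<and> x \<noteq> z
     \<and> E x y \<and> E y z \<and> E x z)"

end

theory Submission
  imports Defs
begin

text \<open>An arc u \<rightarrow> v always ends in the branch hanging from the last-born
  sibling l(p u) of u, so v lies at depth at least that of u and its ancestor at the depth
  of u is l(p u) \<noteq> u. Hence there is no arc between a vertex and one of its descendants;
  since the out-neighbours of a vertex lie on a single branch, they are pairwise
  non-adjacent. A directed triangle x \<rightarrow> y \<rightarrow> z \<rightarrow> x would keep the depth constant, forcing
  y = l(p x) and z = l(p y) = l(p x) = y. Every orientation of a triangle contains one of
  these two configurations.\<close>

text \<open>Since p r is junk, iterates of p are meaningful only up to the root; ancestors are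
  therefore always taken at a depth difference: the ancestor of v at the depth of u is
  (p ^^ (depth p r v - depth p r u)) v.\<close>

definition depth :: "('v \<Rightarrow> 'v) \<Rightarrow> 'v \<Rightarrow> 'v \<Rightarrow> nat" where
  "depth p r v = (LEAST n. (p ^^ n) v = r)"

lemma depth_parent:
  assumes "rooted_tree V r p" "v \<in> V" "v \<noteq> r"
  shows "depth p r v = Suc (depth p r (p v))"
proof -
  obtain n where n: "(p ^^ n) v = r"
    using assms unfolding rooted_tree_def by blast
  moreover have "n \<noteq> 0"
    using n \<open>v \<noteq> r\<close> by (cases n) simp_all
  ultimately obtain m where m: "(p ^^ m) (p v) = r"
    by (metis funpow_Suc_right not0_implies_Suc o_apply)
  have "(LEAST n. (p ^^ n) v = r) = Suc (LEAST m. (p ^^ m) (p v) = r)"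
    by (rule Least_Suc2[where P = "\<lambda>n. (p ^^ n) v = r" and Q = "\<lambda>m. (p ^^ m) (p v) = r",
          OF n m])
       (simp_all add: \<open>v \<noteq> r\<close> funpow_Suc_right del: funpow.simps)
  then show ?thesis
    unfolding depth_def .
qed

lemma branch_nth_ancestor:
  assumes "rooted_tree V r p" "is_branch V r p xs" "i + d < length xs"
  shows "(p ^^ d) (xs ! (i + d)) = xs ! i \<and> depth p r (xs ! (i + d)) = depth p r (xs ! i) + d"
  using assms(3)
proof (induction d)
  case 0
  then show ?case by simp
next
  case (Suc d)
  have step: "xs ! Suc (i + d) \<in> V" "xs ! Suc (i + d) \<noteq> r" "p (xs ! Suc (i + d)) = xs ! (i + d)"
    using assms(2) Suc.prems unfolding is_branch_def by auto
  have "(p ^^ Suc d) (xs ! (i + Suc d)) = (p ^^ d) (xs ! (i + d))"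
    using step(3) by (simp add: funpow_Suc_right del: funpow.simps)
  then show ?case
    using Suc depth_parent[OF assms(1) step(1,2)] step(3) by simp
qed

lemma branch_members_comparable:
  assumes "rooted_tree V r p" "is_branch V r p xs" "y \<in> set xs" "z \<in> set xs"
    and "depth p r y \<le> depth p r z"
  shows "(p ^^ (depth p r z - depth p r y)) z = y"
proof -
  obtain i j where ij: "i < length xs" "y = xs ! i" "j < length xs" "z = xs ! j"
    using assms(3,4) by (auto simp: in_set_conv_nth)
  show ?thesis
  proof (cases "i \<le> j")
    case True
    then show ?thesis
      using branch_nth_ancestor[OF assms(1,2), of i "j - i"] ij by simp
  next
    case False
    then have "depth p r y = depth p r z + (i - j)"
      using branch_nth_ancestor[OF assms(1,2), of j "i - j"] ij by simp
    then show ?thesis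
      using False assms(5) by simp
  qed
qed

lemma branch_starting_at_member:
  assumes "rooted_tree V r p" "branch_starting_at V r p a xs" "z \<in> set xs"
  shows "depth p r a \<le> depth p r z \<and> (p ^^ (depth p r z - depth p r a)) z = a"
proof -
  have "xs \<noteq> []"
    using assms(3) by auto
  then have branch: "is_branch V r p xs" and head: "a = xs ! 0" "0 < length xs"
    using assms(2) unfolding branch_starting_at_def by (auto simp: hd_conv_nth)
  obtain j where "j < length xs" "z = xs ! j"
    using assms(3) by (auto simp: in_set_conv_nth)
  then have "depth p r a \<le> depth p r z"
    using branch_nth_ancestor[OF assms(1) branch, of 0 j] head by simp
  with branch_members_comparable[OF assms(1) branch] head assms(3) show ?thesis
    by (simp add: nth_mem)
qed

lemma derived_arcD:
  assumes "burling_tree V r p l c" "derived_arc V c u v"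
  shows "u \<in> V" "u \<noteq> r" "l (p u) \<noteq> u" "l (p u) \<in> V" "l (p u) \<noteq> r" "p (l (p u)) = p u"
    and "\<exists>xs. branch_starting_at V r p (l (p u)) xs \<and> c u = set xs"
proof -
  have tree: "rooted_tree V r p"
    and last_born: "\<forall>v \<in> V. children V r p v \<noteq> {} \<longrightarrow> l v \<in> children V r p v"
    and no_arcs: "\<forall>v \<in> V. (v = r \<or> l (p v) = v) \<longrightarrow> c v = {}"
    and arcs: "\<forall>v \<in> V - {r}. l (p v) \<noteq> v \<longrightarrow>
          (\<exists>xs. branch_starting_at V r p (l (p v)) xs \<and> c v = set xs)"
    using assms(1) unfolding burling_tree_def by blast+
  show u: "u \<in> V" "u \<noteq> r" "l (p u) \<noteq> u"
    using assms(2) no_arcs unfolding derived_arc_def by auto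
  then show "\<exists>xs. branch_starting_at V r p (l (p u)) xs \<and> c u = set xs"
    using arcs by blast
  have "p u \<in> V" "u \<in> children V r p (p u)"
    using tree u unfolding rooted_tree_def children_def by auto
  then have "l (p u) \<in> children V r p (p u)"
    using last_born by blast
  then show "l (p u) \<in> V" "l (p u) \<noteq> r" "p (l (p u)) = p u"
    unfolding children_def by simp_all
qed

lemma derived_arc_target_below_last_born:
  assumes "burling_tree V r p l c" "derived_arc V c u v"
  shows "depth p r u \<le> depth p r v \<and> (p ^^ (depth p r v - depth p r u)) v = l (p u)"
proof -
  have tree: "rooted_tree V r p"
    using assms(1) unfolding burling_tree_def by blast
  obtain xs where xs: "branch_starting_at V r p (l (p u)) xs" "c u = set xs"
    using derived_arcD[OF assms] by blast
  have "depth p r (l (p u)) = depth p r u"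
    using depth_parent[OF tree derived_arcD(4,5)[OF assms]]
      depth_parent[OF tree derived_arcD(1,2)[OF assms]] derived_arcD(6)[OF assms] by simp
  moreover have "v \<in> set xs"
    using xs(2) assms(2) unfolding derived_arc_def by simp
  ultimately show ?thesis
    using branch_starting_at_member[OF tree xs(1)] by simp
qed

lemma derived_arc_not_to_descendant:
  assumes "burling_tree V r p l c" "derived_arc V c u v"
  shows "(p ^^ (depth p r v - depth p r u)) v \<noteq> u"
  using derived_arc_target_below_last_born[OF assms] derived_arcD(3)[OF assms] by simp

lemma derived_arc_out_neighbours_nonadjacent:
  assumes tree: "burling_tree V r p l c"
    and "derived_arc V c x y" "derived_arc V c x z"
  shows "\<not> derived_arc V c y z"
proof
  assume yz: "derived_arc V c y z"
  obtain xs where xs: "branch_starting_at V r p (l (p x)) xs" "c x = set xs"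
    using derived_arcD[OF tree assms(2)] by blast
  have "rooted_tree V r p"
    using tree unfolding burling_tree_def by blast
  moreover have "is_branch V r p xs" "y \<in> set xs" "z \<in> set xs"
    using xs assms(2,3) unfolding branch_starting_at_def derived_arc_def by auto
  moreover have "depth p r y \<le> depth p r z"
    using derived_arc_target_below_last_born[OF tree yz] by blast
  ultimately have "(p ^^ (depth p r z - depth p r y)) z = y"
    by (rule branch_members_comparable)
  with derived_arc_not_to_descendant[OF tree yz] show False ..
qed

lemma derived_arc_no_directed_triangle:
  assumes tree: "burling_tree V r p l c"
    and xy: "derived_arc V c x y" and yz: "derived_arc V c y z"
  shows "\<not> derived_arc V c z x"
proof
  assume zx: "derived_arc V c z x"
  note below = derived_arc_target_below_last_born[OF tree]
  have "depth p r y = depth p r x" "depth p r z = depth p r y"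
    using below[OF xy] below[OF yz] below[OF zx] by linarith+
  then have y: "y = l (p x)" and z: "z = l (p y)"
    using below[OF xy] below[OF yz] by auto
  then have "p y = p x"
    using derived_arcD(6)[OF tree xy] by simp
  with y z have "z = y"
    by simp
  then show False
    using derived_arc_not_to_descendant[OF tree yz] by simp
qed

lemma symmetrization_triangle_free:
  assumes out: "\<And>x y z. A x y \<Longrightarrow> A x z \<Longrightarrow> \<not> A y z"
    and cyc: "\<And>x y z. A x y \<Longrightarrow> A y z \<Longrightarrow> \<not> A z x"
  shows "\<not> ((A a b \<or> A b a) \<and> (A b d \<or> A d b) \<and> (A a d \<or> A d a))"
  using out[of a b d] out[of a d b] out[of b a d] out[of b d a] out[of d a b] out[of d b a]
    cyc[of a b d] cyc[of a d b]
  by blast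

theorem lemma3p4:
  fixes W :: "'b set" and E :: "'b \<Rightarrow> 'b \<Rightarrow> bool"
  assumes "burling_graph W E"
  shows "\<not> has_triangle W E"
proof
  assume "has_triangle W E"
  then obtain x y z where xyz: "x \<in> W" "y \<in> W" "z \<in> W" "E x y" "E y z" "E x z"
    unfolding has_triangle_def by blast
  obtain V :: "nat set" and r p l c f where tree: "burling_tree V r p l c"
    and E: "\<forall>x \<in> W. \<forall>y \<in> W. E x y \<longleftrightarrow> (derived_arc V c (f x) (f y) \<or> derived_arc V c (f y) (f x))"
    using assms unfolding burling_graph_def by (elim conjE exE) blast
  have "\<not> ((derived_arc V c (f x) (f y) \<or> derived_arc V c (f y) (f x))
      \<and> (derived_arc V c (f y) (f z) \<or> derived_arc V c (f z) (f y))
      \<and> (derived_arc V c (f x) (f z) \<or> derived_arc V c (f z) (f x)))"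
    using derived_arc_out_neighbours_nonadjacent[OF tree] derived_arc_no_directed_triangle[OF tree]
    by (rule symmetrization_triangle_free)
  with xyz E show False by blast
qed

end
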